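(* Every pseudocompact space $X$ is $\sigma^*_{C(X)}$-$\alpha$-favorable.
   Context: A space is pseudocompact if it is Tychonoff and every real continuous function on it is bounded. $C(X)$ is the set of real continuous functions on $X$. The game $\mathcal J^*_{C(X)}$ on $X$: players $\beta$ and $\alpha$ alternately choose nonempty open sets $V_0\supseteq U_0\supseteq V_1\supseteq U_1\supseteq\cdots$ of $X$, $\beta$ choosing the $V_n$ (starting with $V_0$) and $\alpha$ the $U_n$. $\alpha$ wins the play iff for every sequence $(a_n)$ with $a_n\in U_n$ and every $g\in C(X)$ there is $t\in\bigcap_nU_n$ with $g(t)\in\overline{\{g(a_n):n\in\mathbb N\}}$. $X$ is $\sigma^*_{C(X)}$-$\alpha$-favorable if $\alpha$ has a winning strategy in this game. *)

theory Defs
  imports "HOL-Analysis.Analysis"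
begin

definition tychonoff_space :: "'a topology \<Rightarrow> bool" where
  "tychonoff_space X \<longleftrightarrow> t1_space X \<and> completely_regular_space X"

definition pseudocompact :: "'a topology \<Rightarrow> bool" where
  "pseudocompact X \<longleftrightarrow> tychonoff_space X \<and>
     (\<forall>f. continuous_map X euclideanreal f \<longrightarrow> bounded (f ` topspace X))"

text \<open>A strategy for alpha maps the list [V_0,...,V_n] of beta's moves so far
  to alpha's answer U_n. (alpha's own earlier moves are determined by the
  strategy, so this loses no generality.)\<close>
definition alpha_resp :: "('a set list \<Rightarrow> 'a set) \<Rightarrow> (nat \<Rightarrow> 'a set) \<Rightarrow> nat \<Rightarrow> 'a set" where
  "alpha_resp \<sigma> V n = \<sigma> (map V [0..<Suc n])"

definition beta_legal_upto :: "'a topology \<Rightarrow> ('a set list \<Rightarrow> 'a set) \<Rightarrow> (nat \<Rightarrow> 'a set) \<Rightarrow> nat \<Rightarrow> bool" where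
  "beta_legal_upto X \<sigma> V n \<longleftrightarrow>
     (\<forall>k\<le>n. openin X (V k) \<and> V k \<noteq> {}) \<and>
     (\<forall>k<n. V (Suc k) \<subseteq> alpha_resp \<sigma> V k)"

definition alpha_wins_play :: "'a topology \<Rightarrow> (nat \<Rightarrow> 'a set) \<Rightarrow> bool" where
  "alpha_wins_play X U \<longleftrightarrow>
     (\<forall>a g. (\<forall>n. a n \<in> U n) \<longrightarrow> continuous_map X euclideanreal g \<longrightarrow>
        (\<exists>t \<in> (\<Inter>n. U n). g t \<in> closure (range (\<lambda>n. g (a n)))))"

definition winning_alpha_strategy_CX :: "'a topology \<Rightarrow> ('a set list \<Rightarrow> 'a set) \<Rightarrow> bool" where
  "winning_alpha_strategy_CX X \<sigma> \<longleftrightarrow>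
     (\<forall>V n. beta_legal_upto X \<sigma> V n \<longrightarrow>
        openin X (alpha_resp \<sigma> V n) \<and> alpha_resp \<sigma> V n \<noteq> {} \<and> alpha_resp \<sigma> V n \<subseteq> V n) \<and>
     (\<forall>V. (\<forall>n. beta_legal_upto X \<sigma> V n) \<longrightarrow> alpha_wins_play X (alpha_resp \<sigma> V))"

definition sigma_star_CX_alpha_favorable :: "'a topology \<Rightarrow> bool" where
  "sigma_star_CX_alpha_favorable X \<longleftrightarrow> (\<exists>\<sigma>. winning_alpha_strategy_CX X \<sigma>)"

end

theory Submission
  imports Defs
begin

text \<open>Alpha answers each V_n by a nonempty open U_n whose closure lies in V_n; then every
  cluster point of a sequence of nonempty open sets Q_k \<subseteq> U_k lies in every closure of U_(n+1),
  hence in every U_n. In a pseudocompact space every sequence of nonempty open sets has a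
  cluster point: otherwise the sequence is locally finite, and the sum of k h_k over bump
  functions h_k supported in Q_k is a continuous unbounded function. Given a_n \<in> U_n and g,
  let Q_k be the part of U_k where g is within 1/(k+1) of g(a_k); a cluster point t of the
  Q_k then has g(t) in the closure of {g(a_n)}.\<close>

definition sets_cluster_point :: "'a topology \<Rightarrow> (nat \<Rightarrow> 'a set) \<Rightarrow> 'a \<Rightarrow> bool" where
  "sets_cluster_point X Q t \<longleftrightarrow>
     t \<in> topspace X \<and> (\<forall>N. openin X N \<and> t \<in> N \<longrightarrow> (\<exists>\<^sub>F k in sequentially. N \<inter> Q k \<noteq> {}))"

lemma sets_cluster_point_in_closure_of:
  assumes "sets_cluster_point X Q t" and "\<forall>\<^sub>F k in sequentially. Q k \<subseteq> S"
  shows "t \<in> X closure_of S"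
  unfolding in_closure_of
proof (intro conjI allI impI)
  show "t \<in> topspace X" using assms(1) by (simp add: sets_cluster_point_def)
next
  fix T assume "t \<in> T \<and> openin X T"
  then have "\<exists>\<^sub>F k in sequentially. Q k \<subseteq> S \<and> T \<inter> Q k \<noteq> {}"
    using assms by (intro frequently_eventually_conj) (auto simp: sets_cluster_point_def)
  then show "\<exists>y. y \<in> S \<and> y \<in> T" by (blast dest: frequently_ex)
qed

lemma completely_regular_space_bump_function:
  assumes "completely_regular_space X" "openin X S" "x \<in> S"
  obtains h :: "'a \<Rightarrow> real" where "continuous_map X euclideanreal h"
    "\<And>y. 0 \<le> h y" "h x = 1" "\<And>y. y \<in> topspace X - S \<Longrightarrow> h y = 0"
proof -
  have "\<forall>S x. openin X S \<longrightarrow> x \<in> S \<longrightarrow>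
      (\<exists>f. continuous_map X euclideanreal f \<and> f x = 1 \<and> f ` (topspace X - S) \<subseteq> {0})"
    using assms(1) completely_regular_space_gen_alt'[of 1 0 X] by simp
  then obtain f where f: "continuous_map X euclideanreal f" "f x = 1" "f ` (topspace X - S) \<subseteq> {0}"
    using assms(2,3) by blast
  show ?thesis
  proof
    show "continuous_map X euclideanreal (\<lambda>y. \<bar>f y\<bar>)" using f(1) by (intro continuous_intros)
  qed (use f in auto)
qed

lemma completely_regular_space_bump_sequence:
  assumes "completely_regular_space X" "\<And>k. openin X (S k)" "\<And>k. x k \<in> S k"
  obtains h :: "nat \<Rightarrow> 'a \<Rightarrow> real" where "\<And>k. continuous_map X euclideanreal (h k)"
    "\<And>k y. 0 \<le> h k y" "\<And>k. h k (x k) = 1" "\<And>k y. y \<in> topspace X - S k \<Longrightarrow> h k y = 0"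
proof -
  have "\<forall>k. \<exists>h :: 'a \<Rightarrow> real. continuous_map X euclideanreal h \<and> (\<forall>y. 0 \<le> h y) \<and>
      h (x k) = 1 \<and> (\<forall>y \<in> topspace X - S k. h y = 0)"
  proof
    fix k
    obtain h :: "'a \<Rightarrow> real" where "continuous_map X euclideanreal h" "\<And>y. 0 \<le> h y"
      "h (x k) = 1" "\<And>y. y \<in> topspace X - S k \<Longrightarrow> h y = 0"
      using completely_regular_space_bump_function[OF assms(1,2) assms(3)[of k]] by blast
    then show "\<exists>h :: 'a \<Rightarrow> real. continuous_map X euclideanreal h \<and> (\<forall>y. 0 \<le> h y) \<and>
      h (x k) = 1 \<and> (\<forall>y \<in> topspace X - S k. h y = 0)" by blast
  qed
  then obtain h :: "nat \<Rightarrow> 'a \<Rightarrow> real" where h: "\<And>k. continuous_map X euclideanreal (h k) \<and>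
      (\<forall>y. 0 \<le> h k y) \<and> h k (x k) = 1 \<and> (\<forall>y \<in> topspace X - S k. h k y = 0)"
    by metis
  show ?thesis using h by (intro that[of h]) auto
qed

lemma continuous_map_suminf_locally_finite:
  fixes h :: "nat \<Rightarrow> 'a \<Rightarrow> real"
  assumes cont: "\<And>k. continuous_map X euclideanreal (h k)"
    and locfin: "\<And>x. x \<in> topspace X \<Longrightarrow> \<exists>N m. openin X N \<and> x \<in> N \<and> (\<forall>y\<in>N. \<forall>k\<ge>m. h k y = 0)"
  shows "continuous_map X euclideanreal (\<lambda>y. \<Sum>k. h k y)"
proof -
  obtain N m where Nm: "\<And>x. x \<in> topspace X \<Longrightarrow>
      openin X (N x) \<and> x \<in> N x \<and> (\<forall>y\<in>N x. \<forall>k\<ge>m x. h k y = 0)"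
    using locfin by metis
  have local_sum: "(\<Sum>k. h k y) = (\<Sum>k<m x. h k y)" if "x \<in> topspace X" "y \<in> N x" for x y
    using Nm[OF that(1)] that(2) by (intro suminf_finite) auto
  show ?thesis
  proof (rule pasting_lemma[where I = "topspace X" and T = N and f = "\<lambda>x y. \<Sum>k<m x. h k y"])
    show "continuous_map (subtopology X (N x)) euclideanreal (\<lambda>y. \<Sum>k<m x. h k y)" for x
      by (intro continuous_map_from_subtopology continuous_intros cont) auto
    show "(\<Sum>k<m x. h k y) = (\<Sum>k<m x'. h k y)"
      if "x \<in> topspace X" "x' \<in> topspace X" "y \<in> topspace X \<inter> N x \<inter> N x'" for x x' y
      using local_sum[of x y] local_sum[of x' y] that by simp
    show "\<exists>x. x \<in> topspace X \<and> y \<in> N x \<and> (\<Sum>k. h k y) = (\<Sum>k<m x. h k y)"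
      if "y \<in> topspace X" for y
    proof (intro exI conjI)
      show "y \<in> N y" using Nm[OF that] by simp
      then show "(\<Sum>k. h k y) = (\<Sum>k<m y. h k y)" using local_sum[OF that] by simp
    qed (rule that)
  qed (simp add: Nm)
qed

lemma open_sequence_has_sets_cluster_point:
  assumes cr: "completely_regular_space X"
    and bd: "\<And>f. continuous_map X euclideanreal f \<Longrightarrow> bounded (f ` topspace X)"
    and Q: "\<And>k. openin X (Q k)" "\<And>k. Q k \<noteq> {}"
  shows "\<exists>t. sets_cluster_point X Q t"
proof (rule ccontr)
  assume no_cluster: "\<nexists>t. sets_cluster_point X Q t"
  have locfin: "\<exists>N m. openin X N \<and> x \<in> N \<and> (\<forall>k\<ge>m. N \<inter> Q k = {})"
    if x: "x \<in> topspace X" for x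
  proof -
    have "\<not> sets_cluster_point X Q x" using no_cluster by blast
    then obtain N where "openin X N" "x \<in> N" "\<not> (\<exists>\<^sub>F k in sequentially. N \<inter> Q k \<noteq> {})"
      using x unfolding sets_cluster_point_def by blast
    then show ?thesis unfolding not_frequently eventually_sequentially by auto
  qed
  have "\<forall>k. \<exists>y. y \<in> Q k" using Q(2) by blast
  then obtain x where x: "\<And>k. x k \<in> Q k" by metis
  obtain h :: "nat \<Rightarrow> 'a \<Rightarrow> real" where h: "\<And>k. continuous_map X euclideanreal (h k)"
    "\<And>k y. 0 \<le> h k y" "\<And>k. h k (x k) = 1" "\<And>k y. y \<in> topspace X - Q k \<Longrightarrow> h k y = 0"
    using completely_regular_space_bump_sequence[of X Q x, OF cr Q(1) x] by blast
  have vanish: "\<exists>N m. openin X N \<and> y \<in> N \<and> (\<forall>z\<in>N. \<forall>k\<ge>m. real k * h k z = 0)"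
    if y: "y \<in> topspace X" for y
  proof -
    obtain N m where N: "openin X N" "y \<in> N" "\<And>k. k \<ge> m \<Longrightarrow> N \<inter> Q k = {}"
      using locfin[OF y] by blast
    have "h k z = 0" if "z \<in> N" "k \<ge> m" for z k
    proof (rule h(4))
      show "z \<in> topspace X - Q k" using N(3)[OF that(2)] openin_subset[OF N(1)] that(1) by blast
    qed
    with N(1,2) show ?thesis by auto
  qed
  define F where "F y = (\<Sum>k. real k * h k y)" for y
  have "continuous_map X euclideanreal F"
    unfolding F_def using vanish by (intro continuous_map_suminf_locally_finite continuous_intros h)
  then obtain B where B: "\<And>y. y \<in> topspace X \<Longrightarrow> \<bar>F y\<bar> \<le> B"
    using bd by (meson bounded_real image_eqI)
  obtain k :: nat where k: "real k > B" using reals_Archimedean2 by blast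
  have xk: "x k \<in> topspace X" using x Q(1) openin_subset by blast
  have "summable (\<lambda>j. real j * h j (x k))"
  proof -
    obtain N m where "x k \<in> N" "\<forall>z\<in>N. \<forall>j\<ge>m. real j * h j z = 0" using vanish[OF xk] by blast
    then show ?thesis by (intro summable_finite[of "{..<m}"]) auto
  qed
  then have "(\<Sum>j\<in>{k}. real j * h j (x k)) \<le> F (x k)"
    unfolding F_def using h(2) by (intro sum_le_suminf) auto
  with B[OF xk] k h(3) show False by simp
qed

lemma regular_space_nonempty_open_closure_subset:
  assumes "regular_space X" "openin X V" "V \<noteq> {}"
  obtains U where "openin X U" "U \<noteq> {}" "X closure_of U \<subseteq> V"
proof -
  obtain x where x: "x \<in> V" using assms(3) by auto
  have "neighbourhood_base_of (closedin X) X"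
    using assms(1) by (simp add: neighbourhood_base_of_closedin)
  then have "\<exists>U C. openin X U \<and> closedin X C \<and> x \<in> U \<and> U \<subseteq> C \<and> C \<subseteq> V"
    using assms(2) x unfolding neighbourhood_base_of by simp
  then obtain U C where U: "openin X U" "x \<in> U" and C: "closedin X C" "U \<subseteq> C" "C \<subseteq> V"
    by blast
  show ?thesis
  proof (rule that)
    show "X closure_of U \<subseteq> V" using closure_of_minimal[OF C(2,1)] C(3) by (rule subset_trans)
  qed (use U in auto)
qed

lemma alpha_wins_play_if_closures_nested:
  assumes cr: "completely_regular_space X"
    and bd: "\<And>f. continuous_map X euclideanreal f \<Longrightarrow> bounded (f ` topspace X)"
    and U: "\<And>n. openin X (U n)" "\<And>n. X closure_of U (Suc n) \<subseteq> U n"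
  shows "alpha_wins_play X U"
  unfolding alpha_wins_play_def
proof (intro allI impI)
  fix a g assume a: "\<forall>n. a n \<in> U n" and g: "continuous_map X euclideanreal g"
  have U_antimono: "U n \<subseteq> U m" if "m \<le> n" for m n
  proof (rule lift_Suc_antimono_le[OF _ that])
    show "U (Suc k) \<subseteq> U k" for k
      using closure_of_subset[OF openin_subset[OF U(1)]] U(2) by (rule subset_trans)
  qed
  define Q where "Q k = U k \<inter> {y \<in> topspace X. g y \<in> ball (g (a k)) (inverse (real (Suc k)))}" for k
  have Q_open: "openin X (Q k)" for k
    unfolding Q_def using U(1) openin_continuous_map_preimage[OF g, of "ball _ _"]
    by (intro openin_Int) auto
  have a_in_Q: "a k \<in> Q k" for k
    unfolding Q_def using a openin_subset[OF U(1)] by auto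
  have "\<exists>t. sets_cluster_point X Q t"
    using Q_open a_in_Q by (intro open_sequence_has_sets_cluster_point cr bd) auto
  then obtain t where t: "sets_cluster_point X Q t" ..
  have "t \<in> U n" for n
  proof -
    have "\<forall>\<^sub>F k in sequentially. Q k \<subseteq> U (Suc n)"
      unfolding eventually_sequentially Q_def using U_antimono by blast
    then have "t \<in> X closure_of U (Suc n)" by (rule sets_cluster_point_in_closure_of[OF t])
    then show ?thesis using U(2) by blast
  qed
  moreover have "g t \<in> closure (range (\<lambda>n. g (a n)))"
    unfolding closure_approachable
  proof (intro allI impI)
    fix \<epsilon> :: real assume \<epsilon>: "\<epsilon> > 0"
    define T where "T = {y \<in> topspace X. g y \<in> ball (g t) (\<epsilon>/2)}"
    have "openin X T" unfolding T_def by (rule openin_continuous_map_preimage[OF g]) simp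
    moreover have "t \<in> T" unfolding T_def using t \<epsilon> by (simp add: sets_cluster_point_def)
    ultimately have "\<exists>\<^sub>F k in sequentially. T \<inter> Q k \<noteq> {}"
      using t by (simp add: sets_cluster_point_def)
    moreover have "\<forall>\<^sub>F k in sequentially. inverse (real (Suc k)) < \<epsilon>/2"
      using LIMSEQ_inverse_real_of_nat \<epsilon> by (intro order_tendstoD(2)) auto
    ultimately have "\<exists>\<^sub>F k in sequentially. inverse (real (Suc k)) < \<epsilon>/2 \<and> T \<inter> Q k \<noteq> {}"
      by (rule frequently_eventually_conj)
    then have "\<exists>k. inverse (real (Suc k)) < \<epsilon>/2 \<and> T \<inter> Q k \<noteq> {}"
      by (rule frequently_ex)
    then obtain k y where k: "inverse (real (Suc k)) < \<epsilon>/2" and y: "y \<in> T" "y \<in> Q k"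
      by blast
    have "dist (g (a k)) (g t) < \<epsilon>"
    proof (rule dist_triangle_half_l)
      show "dist (g (a k)) (g y) < \<epsilon>/2" using y(2) k unfolding Q_def by simp
      show "dist (g t) (g y) < \<epsilon>/2" using y(1) unfolding T_def by simp
    qed
    then show "\<exists>z\<in>range (\<lambda>n. g (a n)). dist z (g t) < \<epsilon>" by blast
  qed
  ultimately show "\<exists>t\<in>(\<Inter>n. U n). g t \<in> closure (range (\<lambda>n. g (a n)))" by blast
qed

lemma winning_alpha_strategy_CX_if_shrinking:
  assumes cr: "completely_regular_space X"
    and bd: "\<And>f. continuous_map X euclideanreal f \<Longrightarrow> bounded (f ` topspace X)"
    and \<sigma>: "\<And>L. openin X (last L) \<Longrightarrow> last L \<noteq> {} \<Longrightarrow>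
      openin X (\<sigma> L) \<and> \<sigma> L \<noteq> {} \<and> X closure_of \<sigma> L \<subseteq> last L"
  shows "winning_alpha_strategy_CX X \<sigma>"
proof -
  have resp: "openin X (alpha_resp \<sigma> V n)" "alpha_resp \<sigma> V n \<noteq> {}"
    "X closure_of alpha_resp \<sigma> V n \<subseteq> V n"
    if "openin X (V n)" "V n \<noteq> {}" for V n
    using \<sigma>[of "map V [0..<Suc n]"] that by (simp_all add: alpha_resp_def)
  have resp_subset: "alpha_resp \<sigma> V n \<subseteq> V n" if "openin X (V n)" "V n \<noteq> {}" for V n
    using closure_of_subset[OF openin_subset[OF resp(1)[of V n, OF that]]] resp(3)[of V n, OF that]
    by (rule subset_trans)
  show ?thesis
    unfolding winning_alpha_strategy_CX_def
  proof (intro conjI allI impI)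
    show "openin X (alpha_resp \<sigma> V n)" "alpha_resp \<sigma> V n \<noteq> {}" "alpha_resp \<sigma> V n \<subseteq> V n"
      if "beta_legal_upto X \<sigma> V n" for V n
      using that resp resp_subset by (simp_all add: beta_legal_upto_def)
  next
    fix V assume legal: "\<forall>n. beta_legal_upto X \<sigma> V n"
    have V: "openin X (V n)" "V n \<noteq> {}" "V (Suc n) \<subseteq> alpha_resp \<sigma> V n" for n
      using legal[rule_format, of "Suc n"] legal[rule_format, of n]
      by (simp_all add: beta_legal_upto_def)
    show "alpha_wins_play X (alpha_resp \<sigma> V)"
    proof (rule alpha_wins_play_if_closures_nested[OF cr])
      show "openin X (alpha_resp \<sigma> V n)" for n using resp(1)[of V n, OF V(1,2)] .
      show "X closure_of alpha_resp \<sigma> V (Suc n) \<subseteq> alpha_resp \<sigma> V n" for n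
        using resp(3)[of V "Suc n", OF V(1,2)] V(3) by (rule subset_trans)
    qed (rule bd)
  qed
qed

theorem corollary5p2:
  fixes X :: "'a topology"
  assumes "pseudocompact X"
  shows "sigma_star_CX_alpha_favorable X"
proof -
  have cr: "completely_regular_space X"
    and bd: "\<And>f. continuous_map X euclideanreal f \<Longrightarrow> bounded (f ` topspace X)"
    using assms unfolding pseudocompact_def tychonoff_space_def by auto
  define \<sigma> where "\<sigma> L = (SOME U. openin X U \<and> U \<noteq> {} \<and> X closure_of U \<subseteq> last L)"
    for L :: "'a set list"
  have \<sigma>_shrinks: "openin X (\<sigma> L) \<and> \<sigma> L \<noteq> {} \<and> X closure_of \<sigma> L \<subseteq> last L"
    if "openin X (last L)" "last L \<noteq> {}" for L
    unfolding \<sigma>_def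
    by (rule someI_ex, rule regular_space_nonempty_open_closure_subset
        [OF completely_regular_imp_regular_space[OF cr] that]) blast
  have "winning_alpha_strategy_CX X \<sigma>"
    by (rule winning_alpha_strategy_CX_if_shrinking[OF cr _ \<sigma>_shrinks]) (rule bd)
  then show ?thesis unfolding sigma_star_CX_alpha_favorable_def by blast
qed

end
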